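(* Let $(\mathbb{R}^d,H,\mathcal{L})$ be a cut-and-project scheme such that $\mathcal{L}$ and $\mathcal{L}^\circ$ are both countable. Let $D$ be a lattice in $\mathbb{R}^d$ such that $D\cap\pi^G(\mathcal{L})=\{0\}$ and $D^\circ\cap\pi^{\widehat G}(\mathcal{L}^\circ)=\{0\}$. Let $\mathbb{K}=\mathbb{R}^d/D$ with quotient map $\psi:\mathbb{R}^d\to\mathbb{K}$. Then: (a) $\psi$ is injective on $\pi^G(\mathcal{L})$, and $\psi(\pi^G(\mathcal{L}))$ is dense in $\mathbb{K}$; (b) for every non-empty open set $U\subseteq H$ the set $\psi(\Lambda_U)$ is dense in $\mathbb{K}$.
   Context: $G=\mathbb{R}^d$. A cut-and-project scheme $(G,H,\mathcal{L})$ consists of locally compact abelian groups $G,H$ and a discrete cocompact subgroup $\mathcal{L}\subseteq G\times H$ such that $\pi^G|_{\mathcal{L}}$ is injective and $\pi^H(\mathcal{L})$ is dense in $H$; $\Lambda_U=\pi^G(\mathcal{L}\cap(G\times U))$. The dual group $\widehat G$ of $\mathbb{R}^d$ is identified with $\mathbb{R}^d$ via $x\mapsto(y\mapsto e^{2\pi i\langle x,y\rangle})$; $\mathcal{L}^\circ=\{(\chi,\eta)\in\widehat G\times\widehat H:\chi(g)\eta(h)=1\text{ for all }(g,h)\in\mathcal L\}$ is the annihilator of $\mathcal L$, and $\pi^{\widehat G}$ is the projection to $\widehat G$. For a lattice $D\subseteq\mathbb R^d$, $D^\circ=\{x\in\mathbb{R}^d:\langle y,x\rangle\in\mathbb{Z}\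 \forall y\in D\}$. *)

theory Defs
  imports "HOL-Analysis.Analysis"
begin

definition add_subgroup :: "'a::ab_group_add set \<Rightarrow> bool" where
  "add_subgroup S \<longleftrightarrow> 0 \<in> S \<and> (\<forall>x\<in>S. \<forall>y\<in>S. x + y \<in> S) \<and> (\<forall>x\<in>S. - x \<in> S)"

definition discrete_set :: "'a::topological_space set \<Rightarrow> bool" where
  "discrete_set S \<longleftrightarrow> (\<forall>x\<in>S. \<exists>U. open U \<and> U \<inter> S = {x})"

definition cocompact :: "'a::{topological_space, ab_group_add} set \<Rightarrow> bool" where
  "cocompact S \<longleftrightarrow> (\<exists>K. compact K \<and> (\<forall>z. \<exists>s\<in>S. \<exists>k\<in>K. z = s + k))"

definition lattice_in :: "'a::{topological_space, ab_group_add} set \<Rightarrow> bool" where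
  "lattice_in S \<longleftrightarrow> add_subgroup S \<and> discrete_set S \<and> cocompact S"

text \<open>H is locally compact abelian (Hausdorff is built into the type class t2_space).\<close>
definition LCA_type :: "'h::{topological_ab_group_add, t2_space} itself \<Rightarrow> bool" where
  "LCA_type _ \<longleftrightarrow> locally_compact_space (euclidean :: 'h topology)"

definition characters :: "('h::{topological_ab_group_add} \<Rightarrow> complex) set" where
  "characters = {\<eta>. continuous_on UNIV \<eta> \<and> (\<forall>x. norm (\<eta> x) = 1) \<and>
                    (\<forall>x y. \<eta> (x + y) = \<eta> x * \<eta> y)}"

definition charG :: "'a::euclidean_space \<Rightarrow> 'a \<Rightarrow> complex" where
  "charG \<xi> y = exp (2 * of_real pi * \<i> * of_real (\<xi> \<bullet> y))"

definition cut_and_project ::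
  "('a::euclidean_space \<times> 'h::{topological_ab_group_add, t2_space}) set \<Rightarrow> bool" where
  "cut_and_project L \<longleftrightarrow> LCA_type TYPE('h) \<and> lattice_in L \<and> inj_on fst L \<and>
      closure (snd ` L) = UNIV"

definition annihilator ::
  "('a::euclidean_space \<times> 'h::topological_ab_group_add) set \<Rightarrow> ('a \<times> ('h \<Rightarrow> complex)) set" where
  "annihilator L = {(\<xi>, \<eta>). \<eta> \<in> characters \<and> (\<forall>(g, h)\<in>L. charG \<xi> g * \<eta> h = 1)}"

definition model_set :: "('a \<times> 'h) set \<Rightarrow> 'h set \<Rightarrow> 'a set" where
  "model_set L U = fst ` (L \<inter> (UNIV \<times> U))"

definition dual_lattice :: "'a::euclidean_space set \<Rightarrow> 'a set" where
  "dual_lattice D = {x. \<forall>y\<in>D. y \<bullet> x \<in> \<int>}"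

definition qmap :: "'a::ab_group_add set \<Rightarrow> 'a \<Rightarrow> 'a set" where
  "qmap D x = (\<lambda>y. x + y) ` D"

definition quot_top :: "'a::{topological_space, ab_group_add} set \<Rightarrow> 'a set topology" where
  "quot_top D = topology (\<lambda>S. S \<subseteq> range (qmap D) \<and> open (qmap D -` S))"

lemma openin_quot_top:
  "openin (quot_top D) S \<longleftrightarrow> S \<subseteq> range (qmap D) \<and> open (qmap D -` S)"
proof -
  have "istopology (\<lambda>S. S \<subseteq> range (qmap D) \<and> open (qmap D -` S))"
    unfolding istopology_def by (auto simp: vimage_Union)
  then show ?thesis unfolding quot_top_def by simp
qed

end

theory Submission
  imports Defs
begin

(* Let M be the closure of L + (D x {0}) in R^d x H; it is a closed subgroup, and so is its
   fibre N = {g. (g, 0) \<in> M}, which contains D. If N were a proper subgroup of R^d, some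
   \<xi> \<noteq> 0 would have integral inner product with every element of N. As D is cocompact,
   M \<inter> (F x H) projects onto H for a compact F, so g \<mapsto> exp(-2\<pi>i <\<xi>, g>) descends
   along M to a continuous character \<eta> of H. Then (\<xi>, \<eta>) annihilates L and \<xi> lies in
   the dual lattice of D, contradicting the hypothesis on D. Hence N = R^d, so M contains
   R^d x \<pi>^H(L), which is dense: L + (D x {0}) is dense in R^d x H. A point of it in a box
   V x U is an element of \<Lambda>_U translated by D into V, which is density of \<psi>(\<Lambda>_U);
   U = H gives part (a), and injectivity is D \<inter> \<pi>^G(L) = {0}. *)

lemma add_subgroup_0: "add_subgroup S \<Longrightarrow> 0 \<in> S"
  by (simp add: add_subgroup_def)

lemma add_subgroup_add: "add_subgroup S \<Longrightarrow> x \<in> S \<Longrightarrow> y \<in> S \<Longrightarrow> x + y \<in> S"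
  by (simp add: add_subgroup_def)

lemma add_subgroup_uminus: "add_subgroup S \<Longrightarrow> x \<in> S \<Longrightarrow> - x \<in> S"
  by (simp add: add_subgroup_def)

lemma add_subgroup_diff: "add_subgroup S \<Longrightarrow> x \<in> S \<Longrightarrow> y \<in> S \<Longrightarrow> x - y \<in> S"
  using add_subgroup_add add_subgroup_uminus by (metis diff_conv_add_uminus)

lemma add_subgroup_of_int_scaleR:
  fixes S :: "'a::real_vector set"
  assumes "add_subgroup S" "x \<in> S"
  shows "of_int k *\<^sub>R x \<in> S"
proof (induction k rule: int_induct[where k = 0])
  case base
  then show ?case using assms(1) by (simp add: add_subgroup_0)
next
  case (step1 i)
  then show ?case using add_subgroup_add[OF assms(1) _ assms(2)] by (simp add: scaleR_left_distrib)
next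
  case (step2 i)
  then show ?case using add_subgroup_diff[OF assms(1) _ assms(2)] by (simp add: scaleR_left_diff_distrib)
qed

lemma add_subgroup_Times: "add_subgroup A \<Longrightarrow> add_subgroup B \<Longrightarrow> add_subgroup (A \<times> B)"
  by (auto simp: add_subgroup_def zero_prod_def)

lemma add_subgroup_sums:
  assumes A: "add_subgroup A" and B: "add_subgroup B"
  shows "add_subgroup {a + b | a b. a \<in> A \<and> b \<in> B}"
  unfolding add_subgroup_def
proof (intro conjI ballI)
  show "0 \<in> {a + b | a b. a \<in> A \<and> b \<in> B}"
    using add_subgroup_0[OF A] add_subgroup_0[OF B] by force
next
  fix x y assume "x \<in> {a + b | a b. a \<in> A \<and> b \<in> B}" "y \<in> {a + b | a b. a \<in> A \<and> b \<in> B}"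
  then obtain a b a' b' where "a \<in> A" "b \<in> B" "a' \<in> A" "b' \<in> B" "x = a + b" "y = a' + b'"
    by blast
  moreover have "a + b + (a' + b') = (a + a') + (b + b')" by (simp add: algebra_simps)
  ultimately show "x + y \<in> {a + b | a b. a \<in> A \<and> b \<in> B}"
    using add_subgroup_add[OF A] add_subgroup_add[OF B] by blast
next
  fix x assume "x \<in> {a + b | a b. a \<in> A \<and> b \<in> B}"
  then obtain a b where "a \<in> A" "b \<in> B" "- x = - a + - b" by auto
  then show "- x \<in> {a + b | a b. a \<in> A \<and> b \<in> B}"
    using add_subgroup_uminus[OF A] add_subgroup_uminus[OF B] by blast
qed

(* Modules.additive: the unqualified name denotes additivity of set functions in HOL-Analysis. *)
lemma add_subgroup_image:
  assumes "Modules.additive f" "add_subgroup S"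
  shows "add_subgroup (f ` S)"
  using assms additive.zero[OF assms(1)] unfolding add_subgroup_def
  by (auto simp flip: additive.add[OF assms(1)] additive.minus[OF assms(1)])

lemma add_subgroup_vimage:
  assumes "Modules.additive f" "add_subgroup S"
  shows "add_subgroup (f -` S)"
  using assms additive.zero[OF assms(1)] unfolding add_subgroup_def
  by (simp add: additive.add[OF assms(1)] additive.minus[OF assms(1)])

lemma add_subgroup_closure_prod:
  fixes S :: "('a::topological_ab_group_add \<times> 'b::topological_ab_group_add) set"
  assumes "add_subgroup S"
  shows "add_subgroup (closure S)"
proof -
  have S_closure: "x + y \<in> closure S" "- x \<in> closure S" if "x \<in> S" "y \<in> S" for x y
    using closure_subset add_subgroup_add[OF assms that] add_subgroup_uminus[OF assms that(1)] by blast+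
  have "continuous_on UNIV (\<lambda>p :: ('a \<times> 'b) \<times> ('a \<times> 'b). fst p + snd p)"
    by (simp add: plus_prod_def) (intro continuous_intros)
  moreover have "(\<lambda>p. fst p + snd p) ` (S \<times> S) \<subseteq> closure S"
    using S_closure(1) by auto
  ultimately have "(\<lambda>p. fst p + snd p) ` closure (S \<times> S) \<subseteq> closure S"
    by (intro image_closure_subset) (auto intro: continuous_on_subset)
  then have add: "x + y \<in> closure S" if "x \<in> closure S" "y \<in> closure S" for x y
    using that by (force simp: closure_Times)
  have "continuous_on UNIV (uminus :: 'a \<times> 'b \<Rightarrow> _)"
    by (simp add: uminus_prod_def case_prod_unfold) (intro continuous_intros)
  moreover have "uminus ` S \<subseteq> closure S"
    using S_closure(2) by auto
  ultimately have "uminus ` closure S \<subseteq> closure S"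
    by (intro image_closure_subset) (auto intro: continuous_on_subset)
  then show ?thesis
    unfolding add_subgroup_def using add add_subgroup_0[OF assms] closure_subset by blast
qed

section \<open>Closed subgroups of Euclidean space\<close>

definition proj_perp :: "'a::real_inner \<Rightarrow> 'a \<Rightarrow> 'a" where
  "proj_perp u x = x - ((u \<bullet> x) / (u \<bullet> u)) *\<^sub>R u"

lemma additive_proj_perp: "Modules.additive (proj_perp u)"
  by unfold_locales (simp add: proj_perp_def inner_add_right add_divide_distrib scaleR_add_left)

lemma proj_perp_decomp: "x = proj_perp u x + ((u \<bullet> x) / (u \<bullet> u)) *\<^sub>R u"
  by (simp add: proj_perp_def)

lemma inner_proj_perp: "u \<noteq> 0 \<Longrightarrow> u \<bullet> proj_perp u x = 0"
  by (simp add: proj_perp_def inner_diff_right)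

lemma inner_proj_perp_orthogonal: "u \<bullet> \<xi> = 0 \<Longrightarrow> \<xi> \<bullet> proj_perp u x = \<xi> \<bullet> x"
  by (simp add: proj_perp_def inner_diff_right inner_commute)

lemma proj_perp_in_subspace: "subspace W \<Longrightarrow> u \<in> W \<Longrightarrow> x \<in> W \<Longrightarrow> proj_perp u x \<in> W"
  by (simp add: proj_perp_def subspace_diff subspace_scale)

lemma uniformly_discrete_add_subgroup_closed:
  fixes N :: "'a::real_normed_vector set"
  assumes "add_subgroup N" "e > 0" "\<And>x. x \<in> N \<Longrightarrow> x \<noteq> 0 \<Longrightarrow> e \<le> norm x"
  shows "closed N"
proof (rule discrete_imp_closed[OF \<open>e > 0\<close>], intro ballI impI)
  fix x y assume "x \<in> N" "y \<in> N" "dist y x < e"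
  then show "y = x"
    using assms(3)[of "y - x"] add_subgroup_diff[OF assms(1)] by (force simp: dist_norm)
qed

lemma subspace_uniformly_discrete_eq_0:
  fixes W :: "'a::real_normed_vector set"
  assumes "subspace W" "e > 0" "\<And>x. x \<in> W \<Longrightarrow> x \<noteq> 0 \<Longrightarrow> e \<le> norm x"
  shows "W = {0}"
proof -
  have "w = 0" if "w \<in> W" for w
  proof (rule ccontr)
    assume "w \<noteq> 0"
    define w' where "w' = (e / (2 * norm w)) *\<^sub>R w"
    have "w' \<in> W" "w' \<noteq> 0" "norm w' = e / 2"
      using \<open>w \<in> W\<close> \<open>w \<noteq> 0\<close> assms(1,2) by (simp_all add: w'_def subspace_scale)
    then show False using assms(2,3) by fastforce
  qed
  then show ?thesis using subspace_0[OF assms(1)] by blast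
qed

lemma closed_add_subgroup_contains_limit_direction:
  fixes N :: "'a::real_normed_vector set"
  assumes "closed N" "add_subgroup N" "\<And>n. x n \<in> N" "\<And>n. x n \<noteq> 0" "x \<longlonglongrightarrow> 0"
    and "(\<lambda>n. x n /\<^sub>R norm (x n)) \<longlonglongrightarrow> u"
  shows "t *\<^sub>R u \<in> N"
proof -
  define z where "z n = of_int \<lfloor>t / norm (x n)\<rfloor> *\<^sub>R x n" for n
  have close: "norm (z n - t *\<^sub>R (x n /\<^sub>R norm (x n))) \<le> norm (x n)" for n
  proof -
    have "z n - t *\<^sub>R (x n /\<^sub>R norm (x n)) = (of_int \<lfloor>t / norm (x n)\<rfloor> - t / norm (x n)) *\<^sub>R x n"
      by (simp add: z_def algebra_simps divide_inverse)
    moreover have "\<bar>of_int \<lfloor>t / norm (x n)\<rfloor> - t / norm (x n)\<bar> \<le> 1" by linarith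
    ultimately show ?thesis by (simp add: mult_left_le_one_le)
  qed
  have "(\<lambda>n. z n - t *\<^sub>R (x n /\<^sub>R norm (x n))) \<longlonglongrightarrow> 0"
    by (intro Lim_null_comparison[OF always_eventually tendsto_norm_zero[OF assms(5)]] allI close)
  then have "(\<lambda>n. (z n - t *\<^sub>R (x n /\<^sub>R norm (x n))) + t *\<^sub>R (x n /\<^sub>R norm (x n))) \<longlonglongrightarrow> 0 + t *\<^sub>R u"
    using assms(6) by (intro tendsto_intros)
  moreover have "z n \<in> N" for n
    unfolding z_def using assms(2,3) by (rule add_subgroup_of_int_scaleR)
  ultimately show ?thesis
    using closed_sequentially[OF assms(1)] by auto
qed

lemma closed_add_subgroup_line_or_discrete:
  fixes N :: "'a::euclidean_space set"
  assumes "closed N" "add_subgroup N"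
  shows "(\<exists>u. u \<noteq> 0 \<and> (\<forall>t. t *\<^sub>R u \<in> N)) \<or> (\<exists>e>0. \<forall>x\<in>N. x \<noteq> 0 \<longrightarrow> e \<le> norm x)"
proof (rule disjCI)
  assume "\<not> (\<exists>e>0. \<forall>x\<in>N. x \<noteq> 0 \<longrightarrow> e \<le> norm x)"
  then have "\<exists>x. x \<in> N \<and> x \<noteq> 0 \<and> norm x < inverse (real (Suc n))" for n
    by (metis not_le of_nat_0_less_iff positive_imp_inverse_positive zero_less_Suc)
  then obtain x where x: "\<And>n. x n \<in> N" "\<And>n. x n \<noteq> 0" "\<And>n. norm (x n) < inverse (real (Suc n))"
    by metis
  have "\<forall>n. x n /\<^sub>R norm (x n) \<in> sphere 0 1" using x(2) by simp
  then obtain u r where u: "u \<in> sphere 0 1" and r: "strict_mono r"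
    and lim: "((\<lambda>n. x n /\<^sub>R norm (x n)) \<circ> r) \<longlonglongrightarrow> u"
    by (rule seq_compactE[OF compact_imp_seq_compact[OF compact_sphere]])
  have "x \<longlonglongrightarrow> 0"
    by (intro Lim_null_comparison[OF always_eventually LIMSEQ_inverse_real_of_nat] allI
        less_imp_le x(3))
  then have "(x \<circ> r) \<longlonglongrightarrow> 0" using r by (rule LIMSEQ_subseq_LIMSEQ)
  then have "t *\<^sub>R u \<in> N" for t
    using closed_add_subgroup_contains_limit_direction[OF assms, of "x \<circ> r"] x lim
    by (simp add: o_def)
  moreover have "u \<noteq> 0" using u by auto
  ultimately show "\<exists>u. u \<noteq> 0 \<and> (\<forall>t. t *\<^sub>R u \<in> N)" by blast
qed

lemma uniformly_discrete_shortest_vector: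
  fixes N :: "'a::euclidean_space set"
  assumes "closed N" "e > 0" "\<forall>x\<in>N. x \<noteq> 0 \<longrightarrow> e \<le> norm x" "x\<^sub>0 \<in> N" "x\<^sub>0 \<noteq> 0"
  obtains u where "u \<in> N" "u \<noteq> 0" "\<And>y. y \<in> N \<Longrightarrow> y \<noteq> 0 \<Longrightarrow> norm u \<le> norm y"
proof -
  define K where "K = (N \<inter> {x. e \<le> norm x}) \<inter> cball 0 (norm x\<^sub>0)"
  have "compact K"
    unfolding K_def by (intro closed_Int_compact closed_Int assms(1) closed_Collect_le) (auto intro: continuous_intros)
  moreover have "x\<^sub>0 \<in> K" using assms(3-5) by (simp add: K_def)
  ultimately obtain u where "u \<in> K" and min: "\<And>y. y \<in> K \<Longrightarrow> norm u \<le> norm y"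
    using continuous_attains_inf[of K norm] by (metis continuous_on_norm_id empty_iff)
  moreover have "norm u \<le> norm y" if "y \<in> N" "y \<noteq> 0" for y
    using min[of y] \<open>u \<in> K\<close> assms(3) that by (force simp: K_def)
  ultimately show thesis using that assms(2) by (force simp: K_def)
qed

lemma proj_perp_shortest_vector:
  fixes N :: "'a::euclidean_space set"
  assumes N: "add_subgroup N" and u: "u \<in> N" "u \<noteq> 0"
    and shortest: "\<And>y. y \<in> N \<Longrightarrow> y \<noteq> 0 \<Longrightarrow> norm u \<le> norm y" and n: "n \<in> N"
  shows "norm u \<le> 2 * norm (proj_perp u n) \<or> (u \<bullet> n) / (u \<bullet> u) \<in> \<int>"
proof (rule disjCI)
  define t where "t = (u \<bullet> n) / (u \<bullet> u)"
  define n' where "n' = n - of_int (round t) *\<^sub>R u"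
  assume "(u \<bullet> n) / (u \<bullet> u) \<notin> \<int>"
  then have "t - of_int (round t) \<noteq> 0" unfolding t_def by (metis Ints_of_int eq_iff_diff_eq_0)
  have n'_eq: "n' = proj_perp u n + (t - of_int (round t)) *\<^sub>R u"
    using proj_perp_decomp[of n u] unfolding n'_def t_def by (simp add: algebra_simps)
  have "n' \<in> N" unfolding n'_def using N n u(1) by (intro add_subgroup_diff add_subgroup_of_int_scaleR)
  moreover have "n' \<noteq> 0"
  proof
    assume "n' = 0"
    have "u \<bullet> n' = (t - of_int (round t)) * (u \<bullet> u)"
      unfolding n'_eq using inner_proj_perp[OF u(2), of n] by (simp add: inner_add_right)
    then show False using \<open>n' = 0\<close> \<open>t - of_int (round t) \<noteq> 0\<close> u(2) by simp
  qed
  ultimately have "(norm u)\<^sup>2 \<le> (norm n')\<^sup>2" using shortest by simp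
  also have "\<dots> = (norm (proj_perp u n))\<^sup>2 + (t - of_int (round t))\<^sup>2 * (norm u)\<^sup>2"
    unfolding n'_eq using inner_proj_perp[OF u(2), of n]
    by (subst norm_add_Pythagorean) (simp_all add: orthogonal_def inner_commute power_mult_distrib)
  also have "\<dots> \<le> (norm (proj_perp u n))\<^sup>2 + (1/2)\<^sup>2 * (norm u)\<^sup>2"
  proof -
    have "\<bar>t - of_int (round t)\<bar> \<le> \<bar>1/2\<bar>"
      using of_int_round_abs_le[of t] by (simp add: abs_minus_commute)
    then have "(t - of_int (round t))\<^sup>2 \<le> (1/2)\<^sup>2" by (simp only: abs_le_square_iff)
    then show ?thesis by (intro add_left_mono mult_right_mono) simp_all
  qed
  finally have "3 * (norm u)\<^sup>2 \<le> 4 * (norm (proj_perp u n))\<^sup>2" by (simp add: power_divide)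
  then have "(norm u)\<^sup>2 \<le> 4 * (norm (proj_perp u n))\<^sup>2"
    using zero_le_power2[of "norm u"] by linarith
  then have "(norm u)\<^sup>2 \<le> (2 * norm (proj_perp u n))\<^sup>2" by (simp add: power_mult_distrib)
  then show "norm u \<le> 2 * norm (proj_perp u n)" by (rule power2_le_imp_le) simp
qed

lemma proj_perp_line_subgroup:
  assumes "add_subgroup N" "u \<noteq> 0" "\<And>t. t *\<^sub>R u \<in> N"
  shows "proj_perp u ` N = N \<inter> {x. u \<bullet> x = 0}"
proof
  show "proj_perp u ` N \<subseteq> N \<inter> {x. u \<bullet> x = 0}"
    using assms add_subgroup_diff inner_proj_perp by (fastforce simp: proj_perp_def)
  show "N \<inter> {x. u \<bullet> x = 0} \<subseteq> proj_perp u ` N"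
    by (force simp: proj_perp_def)
qed

lemma proj_perp_shortest_vector_far:
  fixes N :: "'a::euclidean_space set"
  assumes N: "add_subgroup N" and u: "u \<in> N" "u \<noteq> 0"
    and shortest: "\<And>y. y \<in> N \<Longrightarrow> y \<noteq> 0 \<Longrightarrow> norm u \<le> norm y"
    and n: "n \<in> N" "proj_perp u n \<noteq> 0"
  shows "norm u \<le> 2 * norm (proj_perp u n)"
  using proj_perp_shortest_vector[OF N u shortest n(1)]
proof
  assume "(u \<bullet> n) / (u \<bullet> u) \<in> \<int>"
  then obtain k where "(u \<bullet> n) / (u \<bullet> u) = of_int k" by (auto elim: Ints_cases)
  then have "proj_perp u n \<in> N"
    using add_subgroup_diff[OF N n(1) add_subgroup_of_int_scaleR[OF N u(1)]] by (simp add: proj_perp_def)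
  then show ?thesis using shortest[OF _ n(2)] norm_ge_zero[of "proj_perp u n"] by linarith
qed

lemma proj_perp_shortest_vector_eq_0:
  fixes N :: "'a::euclidean_space set"
  assumes N: "add_subgroup N" and u: "u \<in> N" "u \<noteq> 0"
    and shortest: "\<And>y. y \<in> N \<Longrightarrow> y \<noteq> 0 \<Longrightarrow> norm u \<le> norm y"
    and n: "n \<in> N" "proj_perp u n = 0"
  shows "(u /\<^sub>R (u \<bullet> u)) \<bullet> n \<in> \<int>"
  using proj_perp_shortest_vector[OF N u shortest n(1)] n(2) u(2)
  by (simp add: divide_inverse mult.commute)

lemma closed_add_subgroup_reduction_line:
  fixes N W :: "'a::euclidean_space set"
  assumes W: "subspace W" "N \<subseteq> W" and N: "closed N" "add_subgroup N" "N \<noteq> W"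
    and u: "u \<noteq> 0" "\<And>t. t *\<^sub>R u \<in> N"
  shows "closed (proj_perp u ` N)" "proj_perp u ` N \<noteq> W \<inter> {x. u \<bullet> x = 0}"
proof -
  have image: "proj_perp u ` N = N \<inter> {x. u \<bullet> x = 0}"
    using proj_perp_line_subgroup[OF N(2) u] .
  then show "closed (proj_perp u ` N)" by (simp add: closed_Int N(1) closed_hyperplane)
  show "proj_perp u ` N \<noteq> W \<inter> {x. u \<bullet> x = 0}"
  proof
    assume fills: "proj_perp u ` N = W \<inter> {x. u \<bullet> x = 0}"
    have "w \<in> N" if "w \<in> W" for w
    proof -
      have "proj_perp u w \<in> W \<inter> {x. u \<bullet> x = 0}"
        using that u(2)[of 1] W proj_perp_in_subspace inner_proj_perp[OF u(1)] by auto
      then have "proj_perp u w + ((u \<bullet> w) / (u \<bullet> u)) *\<^sub>R u \<in> N"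
        using add_subgroup_add[OF N(2) _ u(2)] fills image by blast
      then show "w \<in> N" by (simp flip: proj_perp_decomp)
    qed
    then show False using N(3) W(2) by blast
  qed
qed

lemma closed_add_subgroup_reduction_discrete:
  fixes N W :: "'a::euclidean_space set"
  assumes W: "subspace W" and N: "add_subgroup N" and u: "u \<in> N" "u \<noteq> 0"
    and shortest: "\<And>y. y \<in> N \<Longrightarrow> y \<noteq> 0 \<Longrightarrow> norm u \<le> norm y"
  shows "closed (proj_perp u ` N)"
    and "proj_perp u ` N = W \<inter> {x. u \<bullet> x = 0} \<Longrightarrow> \<forall>n\<in>N. (u /\<^sub>R (u \<bullet> u)) \<bullet> n \<in> \<int>"
proof -
  have far: "norm u / 2 \<le> norm y" if "y \<in> proj_perp u ` N" "y \<noteq> 0" for y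
    using that proj_perp_shortest_vector_far[OF N u shortest] by fastforce
  show "closed (proj_perp u ` N)"
    using add_subgroup_image[OF additive_proj_perp N] far u(2)
    by (intro uniformly_discrete_add_subgroup_closed[of _ "norm u / 2"]) auto
  assume fills: "proj_perp u ` N = W \<inter> {x. u \<bullet> x = 0}"
  then have "W \<inter> {x. u \<bullet> x = 0} = {0}"
    using far u(2) subspace_inter[OF W subspace_hyperplane]
    by (intro subspace_uniformly_discrete_eq_0[of _ "norm u / 2"]) auto
  then show "\<forall>n\<in>N. (u /\<^sub>R (u \<bullet> u)) \<bullet> n \<in> \<int>"
    using fills proj_perp_shortest_vector_eq_0[OF N u shortest] by blast
qed

(* The direction u along which the induction on dim W projects. The projection of N can fill
   the orthogonal complement of u in W only if N is discrete and W is the line through u,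
   in which case N = \<int>u. *)
lemma closed_add_subgroup_reduction:
  fixes N W :: "'a::euclidean_space set"
  assumes W: "subspace W" "N \<subseteq> W" and N: "closed N" "add_subgroup N" "N \<noteq> W" "N \<noteq> {0}"
  obtains u where "u \<in> N" "u \<noteq> 0" "closed (proj_perp u ` N)"
    "proj_perp u ` N = W \<inter> {x. u \<bullet> x = 0} \<Longrightarrow> \<forall>n\<in>N. (u /\<^sub>R (u \<bullet> u)) \<bullet> n \<in> \<int>"
  using closed_add_subgroup_line_or_discrete[OF N(1,2)]
proof
  assume "\<exists>u. u \<noteq> 0 \<and> (\<forall>t. t *\<^sub>R u \<in> N)"
  then obtain u where u: "u \<noteq> 0" "\<And>t. t *\<^sub>R u \<in> N" by blast
  then show thesis
    using that[of u] u(2)[of 1] closed_add_subgroup_reduction_line[OF W N(1-3) u] by simp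
next
  assume "\<exists>e>0. \<forall>x\<in>N. x \<noteq> 0 \<longrightarrow> e \<le> norm x"
  moreover obtain x\<^sub>0 where "x\<^sub>0 \<in> N" "x\<^sub>0 \<noteq> 0" using N(4) add_subgroup_0[OF N(2)] by blast
  ultimately obtain u where u: "u \<in> N" "u \<noteq> 0"
    and shortest: "\<And>y. y \<in> N \<Longrightarrow> y \<noteq> 0 \<Longrightarrow> norm u \<le> norm y"
    using uniformly_discrete_shortest_vector[OF N(1)] by metis
  then show thesis using that closed_add_subgroup_reduction_discrete[OF W(1) N(2) u shortest] by blast
qed

lemma proper_closed_add_subgroup_integral_functional:
  fixes N W :: "'a::euclidean_space set"
  assumes "subspace W" "N \<subseteq> W" "closed N" "add_subgroup N" "N \<noteq> W"
  shows "\<exists>\<xi>\<in>W. \<xi> \<noteq> 0 \<and> (\<forall>n\<in>N. \<xi> \<bullet> n \<in> \<int>)"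
  using assms
proof (induction "dim W" arbitrary: W N rule: less_induct)
  case less
  note W = less.prems(1,2) and N = less.prems(3-5)
  show ?case
  proof (cases "N = {0}")
    case True
    then obtain w where "w \<in> W" "w \<noteq> 0" using W N(3) subspace_0 by blast
    with True show ?thesis by auto
  next
    case False
    obtain u where u: "u \<in> N" "u \<noteq> 0" and closed: "closed (proj_perp u ` N)"
      and degenerate: "proj_perp u ` N = W \<inter> {x. u \<bullet> x = 0} \<Longrightarrow> \<forall>n\<in>N. (u /\<^sub>R (u \<bullet> u)) \<bullet> n \<in> \<int>"
      using closed_add_subgroup_reduction[OF W N False] by blast
    define W' where "W' = W \<inter> {x. u \<bullet> x = 0}"
    have "u \<in> W" using u(1) W(2) by blast
    have W': "subspace W'" unfolding W'_def using W(1) subspace_hyperplane by (rule subspace_inter)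
    have "dim W' < dim W"
    proof (rule dim_psubset)
      have "u \<notin> W'" using u(2) by (simp add: W'_def)
      then have "W' \<subset> W" using \<open>u \<in> W\<close> unfolding W'_def by blast
      then show "span W' \<subset> span W"
        using W(1) W' by (simp add: span_eq_iff[THEN iffD2])
    qed
    have image: "proj_perp u ` N \<subseteq> W'"
      using W \<open>u \<in> W\<close> proj_perp_in_subspace inner_proj_perp[OF u(2)] by (auto simp: W'_def)
    show ?thesis
    proof (cases "proj_perp u ` N = W'")
      case True
      moreover have "u /\<^sub>R (u \<bullet> u) \<in> W" "u /\<^sub>R (u \<bullet> u) \<noteq> 0"
        using u(2) \<open>u \<in> W\<close> W(1) by (simp_all add: subspace_scale)
      ultimately show ?thesis using degenerate unfolding W'_def by blast
    next
      case False
      then obtain \<xi> where "\<xi> \<in> W'" "\<xi> \<noteq> 0" "\<forall>n\<in>proj_perp u ` N. \<xi> \<bullet> n \<in> \<int>"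
        using less.hyps[OF \<open>dim W' < dim W\<close> W' image closed] N(2)
          add_subgroup_image[OF additive_proj_perp] by blast
      moreover have "u \<bullet> \<xi> = 0" using \<open>\<xi> \<in> W'\<close> by (simp add: W'_def)
      ultimately show ?thesis using inner_proj_perp_orthogonal[of u \<xi>] by (auto simp: W'_def)
    qed
  qed
qed

section \<open>Characters of R^d descending to H\<close>

lemma charG_add: "charG \<xi> (a + b) = charG \<xi> a * charG \<xi> b"
  by (simp add: charG_def inner_add_right distrib_left exp_add[symmetric] algebra_simps)

lemma norm_charG: "norm (charG \<xi> y) = 1"
proof -
  have "charG \<xi> y = exp (\<i> * of_real (2 * pi * (\<xi> \<bullet> y)))" by (simp add: charG_def algebra_simps)
  then show ?thesis by simp
qed

lemma charG_mult_cnj: "charG \<xi> y * cnj (charG \<xi> y) = 1"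
  using norm_charG[of \<xi> y] by (metis complex_norm_square mult.commute norm_one of_real_1 power_one)

lemma continuous_on_cnj_charG: "continuous_on UNIV (\<lambda>g. cnj (charG \<xi> g))"
  unfolding charG_def by (intro continuous_intros)

lemma charG_eq_if_inner_diff_Ints:
  assumes "\<xi> \<bullet> (a - b) \<in> \<int>"
  shows "charG \<xi> a = charG \<xi> b"
proof -
  obtain k where "\<xi> \<bullet> (a - b) = of_int k" using assms by (auto elim: Ints_cases)
  then have "charG \<xi> (a - b) = 1" unfolding charG_def exp_eq_1 by simp
  then show ?thesis using charG_add[of \<xi> "a - b" b] by simp
qed

lemma closed_snd_image:
  fixes A :: "('a::topological_space \<times> 'b::topological_space) set"
  assumes "compact F" "closed A" "A \<subseteq> F \<times> UNIV"
  shows "closed (snd ` A)"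
proof -
  have "top_of_set (F \<times> UNIV) = prod_topology (top_of_set F) (euclidean :: 'b topology)"
    using subtopology_Times[of euclidean euclidean F UNIV] by (simp add: euclidean_product_topology)
  then have "closedin (prod_topology (top_of_set F) euclidean) A"
    using closed_subset[OF assms(3,2)] by metis
  moreover have "closed_map (prod_topology (top_of_set F) euclidean) euclidean snd"
    using assms(1) by (intro closed_map_snd) (simp add: compact_space_subtopology)
  ultimately show ?thesis by (auto simp: closed_map_def)
qed

lemma continuous_on_factor_snd:
  fixes A :: "('a::topological_space \<times> 'b::topological_space) set"
    and c :: "'a \<Rightarrow> 'c::topological_space"
  assumes "compact F" "closed A" "A \<subseteq> F \<times> UNIV" "snd ` A = UNIV"
    and "continuous_on UNIV c" "\<And>g h. (g, h) \<in> A \<Longrightarrow> f h = c g"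
  shows "continuous_on UNIV f"
  unfolding continuous_on_closed_vimage[OF closed_UNIV]
proof (intro allI impI)
  fix B :: "'c set" assume "closed B"
  have "f -` B = snd ` (A \<inter> (c -` B \<times> UNIV))"
  proof (intro equalityI subsetI)
    fix h assume "h \<in> f -` B"
    moreover have "h \<in> snd ` A" using assms(4) by simp
    then obtain g where "(g, h) \<in> A" by force
    ultimately show "h \<in> snd ` (A \<inter> (c -` B \<times> UNIV))" using assms(6) by force
  next
    fix h assume "h \<in> snd ` (A \<inter> (c -` B \<times> UNIV))"
    then obtain g where "(g, h) \<in> A" "c g \<in> B" by force
    then show "h \<in> f -` B" using assms(6) by simp
  qed
  moreover have "closed (snd ` (A \<inter> (c -` B \<times> UNIV)))"
    using assms(1-3,5) \<open>closed B\<close> by (intro closed_snd_image closed_Int closed_Times closed_vimage) auto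
  ultimately show "closed (f -` B \<inter> UNIV)" by simp
qed

lemma character_descends:
  fixes M :: "('a::euclidean_space \<times> 'h::topological_ab_group_add) set"
  assumes M: "closed M" "add_subgroup M" and F: "compact F" "snd ` (M \<inter> (F \<times> UNIV)) = UNIV"
    and integral: "\<And>g. (g, 0) \<in> M \<Longrightarrow> \<xi> \<bullet> g \<in> \<int>"
  obtains \<eta> where "\<eta> \<in> characters" "\<And>g h. (g, h) \<in> M \<Longrightarrow> \<eta> h = cnj (charG \<xi> g)"
proof -
  have well_defined: "charG \<xi> g = charG \<xi> g'" if "(g, h) \<in> M" "(g', h) \<in> M" for g g' h
    using add_subgroup_diff[OF M(2) that] integral by (intro charG_eq_if_inner_diff_Ints) simp
  define \<eta> where "\<eta> h = cnj (charG \<xi> (SOME g. (g, h) \<in> M))" for h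
  have \<eta>: "\<eta> h = cnj (charG \<xi> g)" if "(g, h) \<in> M" for g h
    using someI[of "\<lambda>g. (g, h) \<in> M", OF that] well_defined[OF _ that] by (simp add: \<eta>_def)
  have onto: "\<exists>g. (g, h) \<in> M" for h
  proof -
    have "h \<in> snd ` (M \<inter> (F \<times> UNIV))" using F(2) by simp
    then show ?thesis by force
  qed
  have "continuous_on UNIV \<eta>"
    using F M(1) \<eta> continuous_on_cnj_charG
    by (intro continuous_on_factor_snd[of F "M \<inter> (F \<times> UNIV)" "\<lambda>g. cnj (charG \<xi> g)"])
       (auto intro: closed_Int closed_Times compact_imp_closed)
  moreover have "norm (\<eta> h) = 1" for h
    using onto[of h] \<eta> norm_charG by fastforce
  moreover have "\<eta> (h + h') = \<eta> h * \<eta> h'" for h h'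
  proof -
    obtain g g' where "(g, h) \<in> M" "(g', h') \<in> M" using onto by blast
    moreover from this have "(g + g', h + h') \<in> M" using add_subgroup_add[OF M(2)] by fastforce
    ultimately show ?thesis using \<eta> by (simp add: charG_add)
  qed
  ultimately have "\<eta> \<in> characters" by (simp add: characters_def)
  then show thesis using that \<eta> by blast
qed

lemma qmap_eq_iff:
  assumes "add_subgroup D"
  shows "qmap D x = qmap D y \<longleftrightarrow> x - y \<in> D"
proof
  assume "qmap D x = qmap D y"
  then have "x + 0 \<in> (\<lambda>d. y + d) ` D"
    using add_subgroup_0[OF assms] unfolding qmap_def by blast
  then show "x - y \<in> D" by (auto simp: algebra_simps)
next
  assume xy: "x - y \<in> D"
  have "y + d \<in> qmap D x" and "x + d \<in> qmap D y" if "d \<in> D" for d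
  proof -
    have "y + d = x + (d - (x - y))" and "x + d = y + (d + (x - y))"
      by (simp_all add: algebra_simps)
    then show "y + d \<in> qmap D x" and "x + d \<in> qmap D y"
      using that xy assms unfolding qmap_def by (blast intro: add_subgroup_diff add_subgroup_add)+
  qed
  then show "qmap D x = qmap D y" unfolding qmap_def by blast
qed

lemma topspace_quot_top: "topspace (quot_top D) = range (qmap D)"
proof (rule antisym)
  show "topspace (quot_top D) \<subseteq> range (qmap D)"
    by (metis openin_quot_top openin_topspace)
  show "range (qmap D) \<subseteq> topspace (quot_top D)"
  proof (rule openin_subset)
    have "qmap D -` range (qmap D) = UNIV" by blast
    then show "openin (quot_top D) (range (qmap D))" by (simp add: openin_quot_top)
  qed
qed

lemma inj_on_qmap:
  assumes "add_subgroup D" "add_subgroup A" "D \<inter> A = {0}"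
  shows "inj_on (qmap D) A"
proof (rule inj_onI)
  fix x y assume "x \<in> A" "y \<in> A" "qmap D x = qmap D y"
  then have "x - y \<in> D \<inter> A" using assms(1,2) by (simp add: qmap_eq_iff add_subgroup_diff)
  then show "x = y" using assms(3) by simp
qed

lemma quot_top_dense:
  assumes "add_subgroup D"
    and hits: "\<And>V. open V \<Longrightarrow> V \<noteq> {} \<Longrightarrow> \<exists>a\<in>A. \<exists>d\<in>D. a + d \<in> V"
  shows "quot_top D closure_of (qmap D ` A) = topspace (quot_top D)"
proof (rule antisym[OF closure_of_subset_topspace subsetI])
  fix x assume x: "x \<in> topspace (quot_top D)"
  then obtain g where g: "x = qmap D g" by (auto simp: topspace_quot_top)
  show "x \<in> quot_top D closure_of (qmap D ` A)"
    unfolding in_closure_of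
  proof (intro conjI allI impI x)
    fix T assume T: "x \<in> T \<and> openin (quot_top D) T"
    then have "open (qmap D -` T)" "g \<in> qmap D -` T" using g by (auto simp: openin_quot_top)
    then obtain a d where "a \<in> A" "d \<in> D" "qmap D (a + d) \<in> T" using hits by blast
    moreover have "qmap D (a + d) = qmap D a" using assms(1) \<open>d \<in> D\<close> by (simp add: qmap_eq_iff)
    ultimately show "\<exists>y. y \<in> qmap D ` A \<and> y \<in> T" by auto
  qed
qed

section \<open>Density of L + (D x {0})\<close>

lemma additive_fst: "Modules.additive fst"
  by unfold_locales simp

lemma additive_Pair_0: "Modules.additive (\<lambda>x. (x, 0))"
  by unfold_locales simp

lemma snd_image_cocompact_slice:
  fixes M :: "('a::euclidean_space \<times> 'h::topological_ab_group_add) set"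
  assumes M: "closed M" "add_subgroup M" "L \<subseteq> M" "D \<times> {0} \<subseteq> M"
    and dense: "closure (snd ` L) = UNIV"
    and F: "compact F" "\<And>z. \<exists>s\<in>D. \<exists>k\<in>F. z = s + k"
  shows "snd ` (M \<inter> (F \<times> UNIV)) = UNIV"
proof -
  have "snd ` L \<subseteq> snd ` (M \<inter> (F \<times> UNIV))"
  proof
    fix h assume "h \<in> snd ` L"
    then obtain g where "(g, h) \<in> L" by force
    moreover obtain s k where "s \<in> D" "k \<in> F" "g = s + k" using F(2) by blast
    ultimately have "(g, h) - (s, 0) \<in> M" using M by (blast intro: add_subgroup_diff)
    then show "h \<in> snd ` (M \<inter> (F \<times> UNIV))" using \<open>k \<in> F\<close> \<open>g = s + k\<close> by force
  qed
  moreover have "closed (snd ` (M \<inter> (F \<times> UNIV)))"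
    using F(1) M(1) by (intro closed_snd_image) (auto intro: closed_Int closed_Times compact_imp_closed)
  ultimately show ?thesis using dense by (metis closure_minimal top.extremum_uniqueI)
qed

lemma closure_lattice_plus:
  fixes L :: "('a::topological_ab_group_add \<times> 'h::topological_ab_group_add) set"
  assumes L: "add_subgroup L" and D: "add_subgroup D"
  shows "add_subgroup (closure {l + p | l p. l \<in> L \<and> p \<in> D \<times> {0}})"
    and "L \<subseteq> closure {l + p | l p. l \<in> L \<and> p \<in> D \<times> {0}}"
    and "D \<times> {0} \<subseteq> closure {l + p | l p. l \<in> L \<and> p \<in> D \<times> {0}}"
proof -
  have "add_subgroup {0 :: 'h}" by (simp add: add_subgroup_def)
  then show "add_subgroup (closure {l + p | l p. l \<in> L \<and> p \<in> D \<times> {0}})"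
    using L D by (intro add_subgroup_closure_prod add_subgroup_sums add_subgroup_Times)
  have sum_in: "l + p \<in> closure {l + p | l p. l \<in> L \<and> p \<in> D \<times> {0}}"
    if "l \<in> L" "p \<in> D \<times> {0}" for l p
    by (rule closure_subset[THEN subsetD]) (use that in blast)
  have "0 \<in> L" "(0 :: 'a \<times> 'h) \<in> D \<times> {0}"
    using add_subgroup_0[OF L] add_subgroup_0[OF D] by (simp_all add: zero_prod_def)
  then show "L \<subseteq> closure {l + p | l p. l \<in> L \<and> p \<in> D \<times> {0}}"
    and "D \<times> {0} \<subseteq> closure {l + p | l p. l \<in> L \<and> p \<in> D \<times> {0}}"
    using sum_in[of _ 0] sum_in[of 0] by auto
qed

lemma closure_lattice_plus_contains_fibre:
  fixes L :: "('a::euclidean_space \<times> 'h::topological_ab_group_add) set"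
  assumes L: "add_subgroup L" "closure (snd ` L) = UNIV" and D: "add_subgroup D" "cocompact D"
    and dual: "dual_lattice D \<inter> fst ` annihilator L = {0}"
  shows "(g, 0) \<in> closure {l + p | l p. l \<in> L \<and> p \<in> D \<times> {0}}"
proof -
  define M where "M = closure {l + p | l p. l \<in> L \<and> p \<in> D \<times> {0}}"
  have M: "add_subgroup M" "closed M" "L \<subseteq> M" "D \<times> {0} \<subseteq> M"
    using closure_lattice_plus[OF L(1) D(1)] by (simp_all add: M_def)
  define N where "N = (\<lambda>g. (g, 0 :: 'h)) -` M"
  have "N = UNIV"
  proof (rule ccontr)
    assume "N \<noteq> UNIV"
    moreover have "closed N" unfolding N_def using M(2) by (intro closed_vimage continuous_intros)
    moreover have "add_subgroup N" unfolding N_def using additive_Pair_0 M(1) by (rule add_subgroup_vimage)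
    ultimately obtain \<xi> where "\<xi> \<noteq> 0" "\<forall>n\<in>N. \<xi> \<bullet> n \<in> \<int>"
      using proper_closed_add_subgroup_integral_functional[OF subspace_UNIV subset_UNIV] by blast
    then have integral: "\<And>g. (g, 0) \<in> M \<Longrightarrow> \<xi> \<bullet> g \<in> \<int>" by (simp add: N_def)
    obtain F where "compact F" "\<And>z. \<exists>s\<in>D. \<exists>k\<in>F. z = s + k"
      using D(2) unfolding cocompact_def by blast
    then obtain \<eta> where "\<eta> \<in> characters" and \<eta>: "\<And>g h. (g, h) \<in> M \<Longrightarrow> \<eta> h = cnj (charG \<xi> g)"
      using character_descends[OF M(2,1)] snd_image_cocompact_slice[OF M(2,1,3,4) L(2)] integral
      by metis
    moreover have "charG \<xi> g * \<eta> h = 1" if "(g, h) \<in> L" for g h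
      using \<eta>[OF subsetD[OF M(3) that]] charG_mult_cnj by simp
    ultimately have "(\<xi>, \<eta>) \<in> annihilator L" by (auto simp: annihilator_def)
    moreover have "\<xi> \<in> dual_lattice D"
      using M(4) integral by (auto simp: dual_lattice_def inner_commute)
    ultimately show False using dual \<open>\<xi> \<noteq> 0\<close> by force
  qed
  then have "(g, 0) \<in> M" unfolding N_def by blast
  then show ?thesis by (simp only: M_def)
qed

lemma closure_lattice_plus_eq_UNIV:
  fixes L :: "('a::euclidean_space \<times> 'h::topological_ab_group_add) set"
  assumes L: "add_subgroup L" "closure (snd ` L) = UNIV" and D: "add_subgroup D" "cocompact D"
    and dual: "dual_lattice D \<inter> fst ` annihilator L = {0}"
  shows "closure {l + p | l p. l \<in> L \<and> p \<in> D \<times> {0}} = UNIV"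
proof -
  define M where "M = closure {l + p | l p. l \<in> L \<and> p \<in> D \<times> {0}}"
  have M: "add_subgroup M" "L \<subseteq> M"
    using closure_lattice_plus[OF L(1) D(1)] by (simp_all add: M_def)
  have fibre: "(g, 0) \<in> M" for g
    using closure_lattice_plus_contains_fibre[OF L D dual] by (simp add: M_def)
  have "(UNIV :: 'a set) \<times> snd ` L \<subseteq> M"
  proof
    fix p :: "'a \<times> 'h" assume "p \<in> UNIV \<times> snd ` L"
    then obtain g g' :: 'a and h where "p = (g, h)" "(g', h) \<in> L" by force
    then have "(g', h) + (g - g', 0) \<in> M" using M fibre by (blast intro: add_subgroup_add)
    then show "p \<in> M" using \<open>p = (g, h)\<close> by simp
  qed
  then have "closure (UNIV \<times> snd ` L) \<subseteq> M" by (intro closure_minimal) (simp_all add: M_def)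
  then show ?thesis using L(2) by (simp add: M_def closure_Times top.extremum_uniqueI)
qed

lemma model_set_meets_lattice_translates:
  fixes L :: "('a::topological_ab_group_add \<times> 'h::topological_ab_group_add) set"
  assumes dense: "closure {l + p | l p. l \<in> L \<and> p \<in> D \<times> {0}} = UNIV"
    and "open U" "U \<noteq> {}" "open V" "V \<noteq> {}"
  shows "\<exists>a\<in>model_set L U. \<exists>d\<in>D. a + d \<in> V"
proof -
  have "open (V \<times> U)" "V \<times> U \<noteq> {}" using assms(2-5) by (simp_all add: open_Times)
  then have "V \<times> U \<inter> {l + p | l p. l \<in> L \<and> p \<in> D \<times> {0}} \<noteq> {}"
    using dense open_Int_closure_eq_empty by fastforce
  then obtain g h d where "(g, h) \<in> L" "d \<in> D" "(g, h) + (d, 0) \<in> V \<times> U" by auto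
  then have "(g, h) \<in> L \<inter> UNIV \<times> U" "g + d \<in> V" "d \<in> D" by auto
  moreover from this(1) have "g \<in> model_set L U"
    unfolding model_set_def by (metis fst_conv rev_image_eqI)
  ultimately show ?thesis by blast
qed

theorem lemma6p2:
  fixes L :: "('a::euclidean_space \<times> 'h::{topological_ab_group_add, t2_space}) set"
    and D :: "'a set"
  assumes "cut_and_project L"
    and "countable L"
    and "countable (annihilator L)"
    and "lattice_in D"
    and "D \<inter> fst ` L = {0}"
    and "dual_lattice D \<inter> fst ` annihilator L = {0}"
  shows "inj_on (qmap D) (fst ` L)
    \<and> quot_top D closure_of (qmap D ` fst ` L) = topspace (quot_top D)
    \<and> (\<forall>U. open U \<and> U \<noteq> {} \<longrightarrow>
          quot_top D closure_of (qmap D ` model_set L U) = topspace (quot_top D))"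
proof -
  have L: "add_subgroup L" "closure (snd ` L) = UNIV"
    using assms(1) by (auto simp: cut_and_project_def lattice_in_def)
  have D: "add_subgroup D" "cocompact D"
    using assms(4) by (auto simp: lattice_in_def)
  have dense: "closure {l + p | l p. l \<in> L \<and> p \<in> D \<times> {0}} = UNIV"
    using closure_lattice_plus_eq_UNIV[OF L D assms(6)] .
  have model_set_dense:
    "quot_top D closure_of (qmap D ` model_set L U) = topspace (quot_top D)" if "open U" "U \<noteq> {}" for U
    using quot_top_dense[OF D(1)] model_set_meets_lattice_translates[OF dense that] by blast
  have "inj_on (qmap D) (fst ` L)"
    using inj_on_qmap[OF D(1) add_subgroup_image[OF additive_fst L(1)] assms(5)] .
  moreover have "fst ` L = model_set L UNIV" by (auto simp: model_set_def)
  ultimately show ?thesis using model_set_dense[of UNIV] model_set_dense by simp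
qed

end
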